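(* For every integer $n\geqslant1$, \begin{align*} &\sum_{k=0}^{n-1}(-1)^{k}\frac{2k+1}{(n-k)(n+k+1)} \sum_{m=k}^{n-1}(-1)^{m}\frac{2m+1}{(n-m)(n+m+1)}\\ &\qquad=\frac{\pi^{2}}{12}-\frac{\gamma}{2n+1} +\frac{1}{2}[\psi(2n+1)-\psi(n+1)]^{2} -\frac{1}{2n+1}\psi(2n+1)-\frac{1}{2}\psi_{1}(2n+1). \end{align*}
   Context: $\psi=\Gamma'/\Gamma$ is the digamma function, $\psi_1=\psi'$ the trigamma function, and $\gamma$ the Euler–Mascheroni constant. *)

theory Defs
  imports "HOL-Analysis.Analysis"
begin

end

theory Submission imports Defs begin

text \<open>Partial fractions turn the \<open>k\<close>-th summand into \<open>\<plusminus>(1/(n-k) - 1/(n+k+1))\<close>, and the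
  double sum over \<open>k \<le> m\<close> is half of the square of the simple sum plus the sum of squares.
  Folding \<open>n-k\<close> and \<open>n+k+1\<close> together, these run over \<open>j = 1, \<dots>, 2n\<close>: the simple sum is
  the alternating harmonic sum \<open>\<plusminus>(H\<^sub>2\<^sub>n - H\<^sub>n)\<close>, and the sum of squares is
  \<open>\<Sum>1/j\<^sup>2 - 2H\<^sub>2\<^sub>n/(2n+1)\<close>, because \<open>(n-k) + (n+k+1) = 2n+1\<close> in the cross term.
  Finally \<open>\<psi>(m+1) = H\<^sub>m - \<gamma>\<close> and \<open>\<psi>\<^sub>1(m+1) = \<pi>\<^sup>2/6 - \<Sum>\<^sub>j\<^sub>\<le>\<^sub>m 1/j\<^sup>2\<close>.\<close>

lemma sum_upper_triangle_eq:
  fixes a :: "nat \<Rightarrow> 'a :: comm_ring_1"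
  shows "2 * (\<Sum>k<n. a k * (\<Sum>m=k..<n. a m)) = (\<Sum>k<n. a k)^2 + (\<Sum>k<n. (a k)^2)"
proof (induction n)
  case (Suc n)
  have "(\<Sum>k<Suc n. a k * (\<Sum>m=k..<Suc n. a m))
        = (\<Sum>k<n. a k * (\<Sum>m=k..<n. a m)) + (\<Sum>k<n. a k) * a n + (a n)^2"
    by (simp add: sum_distrib_right distrib_left sum.distrib power2_eq_square)
  with Suc show ?case
    by (simp add: power2_eq_square algebra_simps)
qed simp

lemma sum_lessThan_fold_atLeastAtMost_double:
  fixes f :: "nat \<Rightarrow> 'a :: comm_monoid_add"
  shows "(\<Sum>k<n. f (n - k) + f (n + k + 1)) = (\<Sum>j=1..2*n. f j)"
proof -
  have lower: "(\<Sum>k<n. f (n - k)) = (\<Sum>j=1..n. f j)"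
    using sum.nat_diff_reindex[of "\<lambda>i. f (Suc i)" n]
    by (simp add: Suc_diff_Suc sum.atLeast1_atMost_eq)
  have upper: "(\<Sum>k<n. f (n + k + 1)) = (\<Sum>j=n+1..2*n. f j)"
  proof -
    have "(\<Sum>j=n+1..2*n. f j) = (\<Sum>j=0+(n+1)..<n+(n+1). f j)"
      by (rule sum.cong) auto
    also have "\<dots> = (\<Sum>k=0..<n. f (k + (n+1)))"
      by (rule sum.shift_bounds_nat_ivl)
    finally show ?thesis
      by (simp add: atLeast0LessThan add_ac)
  qed
  have "(\<Sum>j=1..2*n. f j) = (\<Sum>j=1..n. f j) + (\<Sum>j=n+1..2*n. f j)"
    unfolding mult_2 by (rule sum.ub_add_nat) simp
  with lower upper show ?thesis
    by (simp add: sum.distrib)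
qed

lemma sum_alternating_inverse_eq_harm:
  "(\<Sum>j=1..2*n. (-1)^j / real j) = harm n - harm (2*n)"
proof (induction n)
  case (Suc n)
  have two_Suc: "2 * Suc n = Suc (Suc (2*n))"
    by simp
  have "harm (Suc n) = harm n + 2 / (2 * real n + 2)"
    by (simp add: harm_Suc inverse_eq_divide field_simps)
  with Suc show ?case
    unfolding two_Suc by (simp add: harm_Suc inverse_eq_divide algebra_simps)
qed (simp add: harm_def)

lemma Digamma_of_nat_plus_1: "Digamma (of_nat m + 1) = harm m - (euler_mascheroni :: real)"
  using Digamma_of_nat[of m, where 'a=real] by (simp add: add_ac)

lemma Polygamma_1_of_nat_plus_1:
  "Polygamma 1 (of_nat m + 1) = pi^2/6 - (\<Sum>j=1..m. 1 / (of_nat j)^2 :: real)"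
proof -
  have "Polygamma 1 (1 :: real) = (\<Sum>k. 1 / (real k + 1)^2)"
    by (simp add: Polygamma_def inverse_eq_divide add_ac power2_eq_square)
  also have "\<dots> = pi^2/6"
    using inverse_squares_sums by (simp add: sums_iff add_ac)
  finally have at_1: "Polygamma 1 (1 :: real) = pi^2/6" .
  have "Polygamma 1 (1 + real m) = Polygamma 1 1 - (\<Sum>k<m. 1 / (1 + real k) ^ 2)"
    using Polygamma_plus_of_nat[of m "1::real" 1] by (simp add: power2_eq_square)
  also have "(\<Sum>k<m. 1 / (1 + real k) ^ 2) = (\<Sum>j=1..m. 1 / (real j)^2)"
    by (induction m) (auto simp: add_ac)
  finally show ?thesis
    using at_1 by (simp add: add_ac)
qed

lemma square_diff_inverse_eq:
  fixes x y :: "'a :: field"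
  assumes "x \<noteq> 0" "y \<noteq> 0" "x + y \<noteq> 0"
  shows "(1/x - 1/y)^2 = 1/x^2 + 1/y^2 - 2/(x + y) * (1/x + 1/y)"
proof -
  have "1/x + 1/y = (x + y)/(x*y)"
    using assms by (simp add: field_simps)
  then have "2/(x + y) * (1/x + 1/y) = 2/(x*y)"
    using assms by (metis divide_divide_eq_left divide_divide_eq_right
        nonzero_mult_div_cancel_left times_divide_eq_right)
  moreover have "(1/x - 1/y)^2 = 1/x^2 + 1/y^2 - 2/(x*y)"
    using assms by (simp add: field_simps power2_eq_square)
  ultimately show ?thesis
    by simp
qed

definition alt_frac :: "nat \<Rightarrow> nat \<Rightarrow> real" where
  "alt_frac n k = (-1)^k * (2 * real k + 1) / ((real n - real k) * (real n + real k + 1))"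

lemma alt_frac_partial_fractions:
  assumes "k < n"
  shows "alt_frac n k = (-1)^k * (1 / real (n - k) - 1 / real (n + k + 1))"
  using assms by (simp add: alt_frac_def of_nat_diff field_simps)

lemma sum_alt_frac: "(\<Sum>k<n. alt_frac n k) = (-1)^n * (harm n - harm (2*n))"
proof -
  have "alt_frac n k = (-1)^n * ((-1)^(n - k) / real (n - k) + (-1)^(n + k + 1) / real (n + k + 1))"
    if "k < n" for k
  proof -
    obtain d where d: "n = k + d"
      using \<open>k < n\<close> le_Suc_ex less_imp_le by blast
    show ?thesis
      using alt_frac_partial_fractions[OF that]
      by (simp add: d power_add field_simps)
  qed
  then have "(\<Sum>k<n. alt_frac n k)
             = (-1)^n * (\<Sum>k<n. (-1)^(n - k) / real (n - k) + (-1)^(n + k + 1) / real (n + k + 1))"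
    by (simp add: sum_distrib_left)
  also have "\<dots> = (-1)^n * (\<Sum>j=1..2*n. (-1)^j / real j)"
    by (subst sum_lessThan_fold_atLeastAtMost_double) (rule refl)
  finally show ?thesis
    by (simp only: sum_alternating_inverse_eq_harm)
qed

lemma sum_alt_frac_squared:
  "(\<Sum>k<n. (alt_frac n k)^2) = (\<Sum>j=1..2*n. 1 / (real j)^2) - 2 / (2 * real n + 1) * harm (2*n)"
proof -
  have "(alt_frac n k)^2 = (1 / real (n - k)^2 + 1 / real (n + k + 1)^2)
          - 2 / (2 * real n + 1) * (1 / real (n - k) + 1 / real (n + k + 1))"
    if "k < n" for k
  proof -
    have "real (n - k) + real (n + k + 1) = 2 * real n + 1"
      using that by (simp add: of_nat_diff)
    moreover have "((-1::real)^k)^2 = 1"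
      by (simp flip: power_mult)
    ultimately show ?thesis
      using that alt_frac_partial_fractions[OF that]
        square_diff_inverse_eq[of "real (n - k)" "real (n + k + 1)"]
      by (simp add: power_mult_distrib)
  qed
  then have "(\<Sum>k<n. (alt_frac n k)^2)
             = (\<Sum>k<n. 1 / real (n - k)^2 + 1 / real (n + k + 1)^2)
               - 2 / (2 * real n + 1) * (\<Sum>k<n. 1 / real (n - k) + 1 / real (n + k + 1))"
    by (simp add: sum_subtractf sum_distrib_left)
  also have "\<dots> = (\<Sum>j=1..2*n. 1 / (real j)^2) - 2 / (2 * real n + 1) * harm (2*n)"
    by (subst (1 2) sum_lessThan_fold_atLeastAtMost_double) (simp add: harm_def inverse_eq_divide)
  finally show ?thesis .
qed

theorem mainTheorem6:
  fixes n :: nat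
  assumes "n \<ge> 1"
  shows "(\<Sum>k=0..n-1. (-1::real)^k * (2 * real k + 1) / ((real n - real k) * (real n + real k + 1))
            * (\<Sum>m=k..n-1. (-1::real)^m * (2 * real m + 1) / ((real n - real m) * (real n + real m + 1))))
         = pi^2 / 12 - euler_mascheroni / (2 * real n + 1)
           + (1/2) * (Digamma (2 * real n + 1) - Digamma (real n + 1))^2
           - Digamma (2 * real n + 1) / (2 * real n + 1)
           - (1/2) * Polygamma 1 (2 * real n + 1)"
proof -
  have "{0..n-1} = {..<n}" "\<And>k. {k..n-1} = {k..<n}"
    using assms by auto
  then have "2 * (\<Sum>k=0..n-1. alt_frac n k * (\<Sum>m=k..n-1. alt_frac n m))
             = (harm (2*n) - harm n)^2 + (\<Sum>j=1..2*n. 1 / (real j)^2)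
                 - 2 * harm (2*n) / (2 * real n + 1)"
    using sum_upper_triangle_eq[of "alt_frac n" n]
    by (simp add: sum_alt_frac sum_alt_frac_squared power_mult_distrib power2_commute
        flip: power_mult)
  then have sum_eq: "(\<Sum>k=0..n-1. alt_frac n k * (\<Sum>m=k..n-1. alt_frac n m))
             = ((harm (2*n) - harm n)^2 + (\<Sum>j=1..2*n. 1 / (real j)^2)) / 2
                 - harm (2*n) / (2 * real n + 1)"
    by (simp add: field_simps)
  have "2 * real n + 1 = real (2*n) + 1"
    by simp
  then show ?thesis
    unfolding alt_frac_def[symmetric] sum_eq
    by (simp only: Digamma_of_nat_plus_1 Polygamma_1_of_nat_plus_1)
       (simp add: diff_divide_distrib algebra_simps)
qed

end
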